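(* Let $G$ be a finite group and $H$ a subgroup of $G$ with $[G:H]>2$. Then the set $$f_{G-H}=\bigcup_{\substack{g,h\in G\\ g,\,h,\,g^{-1}h\in G-H}}\{\{a,ag,ah\}\mid a\in G\}\subseteq\binom{G}{3}$$ is the set of bases of a rank-$3$ matroid on the ground set $G$ (invariant under left multiplication by $G$); equivalently it corresponds to a three-dimensional tropical subrepresentation of the boolean regular representation $\mathbb{B}[G]$.
   Context: $G$ acts on $\binom{G}{3}$ (3-element subsets of $G$) by $x\cdot\{a,b,c\}=\{xa,xb,xc\}$; the sets $\{\{a,ag,ah\}\mid a\in G\}$ for $e,g,h$ pairwise distinct are the orbits. Three-dimensional tropical subrepresentations of $\mathbb{B}[G]$ (free module over the boolean semifield with basis indexed by $G$, $G$ acting by left multiplication) are equivalent to rank-3 matroids on ground set $G$ with basis set invariant under this action. *)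

theory Defs
  imports "HOL-Algebra.Algebra"
begin

definition matroid_bases :: "'a set \<Rightarrow> 'a set set \<Rightarrow> bool" where
  "matroid_bases E \<B> \<longleftrightarrow>
     finite E \<and> \<B> \<noteq> {} \<and> (\<forall>B\<in>\<B>. B \<subseteq> E) \<and>
     (\<forall>B1\<in>\<B>. \<forall>B2\<in>\<B>. \<forall>x\<in>B1 - B2. \<exists>y\<in>B2 - B1. insert y (B1 - {x}) \<in> \<B>)"

definition matroid_bases_rank :: "'a set \<Rightarrow> nat \<Rightarrow> 'a set set \<Rightarrow> bool" where
  "matroid_bases_rank E r \<B> \<longleftrightarrow> matroid_bases E \<B> \<and> (\<forall>B\<in>\<B>. card B = r)"

definition fGH :: "('a, 'b) monoid_scheme \<Rightarrow> 'a set \<Rightarrow> 'a set set" where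
  "fGH G H = {{a, a \<otimes>\<^bsub>G\<^esub> g, a \<otimes>\<^bsub>G\<^esub> h} | a g h.
      a \<in> carrier G \<and> g \<in> carrier G \<and> h \<in> carrier G \<and>
      g \<notin> H \<and> h \<notin> H \<and> inv\<^bsub>G\<^esub> g \<otimes>\<^bsub>G\<^esub> h \<notin> H}"

end

theory Submission
  imports Defs
begin

text \<open>Two elements \<open>a, b\<close> lie in the same left coset of \<open>H\<close> iff \<open>a\<inverse>b \<in> H\<close>, so the
  triples \<open>{a, ag, ah}\<close> of the theorem are exactly the 3-subsets of \<open>G\<close> meeting three distinct
  left cosets. Colouring each element by its left coset, these are the bases of the rank-3
  truncation of the partition matroid whose blocks are the cosets: when \<open>B\<^sub>1 - {x}\<close> uses two
  colours and \<open>B\<^sub>2\<close> uses three, some element of \<open>B\<^sub>2\<close> carries a third colour and can replace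
  \<open>x\<close>. Left multiplication permutes the left cosets and so preserves the family, and index
  \<open>> 2\<close> makes it nonempty.\<close>

definition rainbow_sets :: "'a set \<Rightarrow> ('a \<Rightarrow> 'c) \<Rightarrow> nat \<Rightarrow> 'a set set" where
  "rainbow_sets E f r = {B. B \<subseteq> E \<and> card B = r \<and> inj_on f B}"

lemma rainbow_sets_nonempty:
  assumes "r \<le> card (f ` E)"
  shows "rainbow_sets E f r \<noteq> {}"
proof -
  obtain S where S: "S \<subseteq> f ` E" "card S = r"
    using obtain_subset_with_card_n[OF assms] by blast
  let ?B = "inv_into E f ` S"
  have "?B \<subseteq> E"
    using S(1) by (auto intro: inv_into_into)
  moreover have "card ?B = r"
    using S by (simp add: card_image inj_on_inv_into)
  moreover have "inj_on f ?B"
    using S(1) by (intro inj_onI) (auto simp: f_inv_into_f subset_iff)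
  ultimately show ?thesis
    unfolding rainbow_sets_def by blast
qed

lemma rainbow_sets_exchange:
  assumes "finite E"
    and B1: "B1 \<in> rainbow_sets E f r" and B2: "B2 \<in> rainbow_sets E f r" and x: "x \<in> B1 - B2"
  shows "\<exists>y\<in>B2 - B1. insert y (B1 - {x}) \<in> rainbow_sets E f r"
proof -
  have "finite B1" "finite B2"
    using B1 B2 \<open>finite E\<close> unfolding rainbow_sets_def by (auto intro: finite_subset)
  then have "r > 0"
    using B1 x unfolding rainbow_sets_def by (auto simp: card_gt_0_iff)
  have "card (f ` (B1 - {x})) < card (f ` B2)"
    using B1 B2 x \<open>r > 0\<close> unfolding rainbow_sets_def
    by (simp add: card_image inj_on_diff)
  then have "\<not> f ` B2 \<subseteq> f ` (B1 - {x})"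
    using \<open>finite B1\<close> by (meson card_mono finite_Diff finite_imageI leD)
  then obtain y where y: "y \<in> B2" "f y \<notin> f ` (B1 - {x})"
    by blast
  have "y \<notin> B1"
    using x y by auto
  moreover have "insert y (B1 - {x}) \<in> rainbow_sets E f r"
    using B1 B2 x y \<open>y \<notin> B1\<close> \<open>r > 0\<close> \<open>finite B1\<close> unfolding rainbow_sets_def
    by (auto simp: card_insert_if inj_on_diff)
  ultimately show ?thesis
    using y by blast
qed

lemma matroid_bases_rank_rainbow_sets:
  assumes "finite E" and "r \<le> card (f ` E)"
  shows "matroid_bases_rank E r (rainbow_sets E f r)"
  using assms rainbow_sets_nonempty[OF assms(2)] rainbow_sets_exchange[OF assms(1), of _ f r]
  unfolding matroid_bases_rank_def matroid_bases_def
  by (auto simp: rainbow_sets_def)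

lemma image_in_rainbow_sets:
  assumes "\<phi> ` E \<subseteq> E"
    and "\<And>a b. a \<in> E \<Longrightarrow> b \<in> E \<Longrightarrow> f (\<phi> a) = f (\<phi> b) \<longleftrightarrow> f a = f b"
    and "B \<in> rainbow_sets E f r"
  shows "\<phi> ` B \<in> rainbow_sets E f r"
proof -
  have "inj_on (f \<circ> \<phi>) B"
    using assms(2,3) unfolding rainbow_sets_def inj_on_def by (auto simp: subset_iff)
  then show ?thesis
    using assms(1,3) unfolding rainbow_sets_def
    by (auto simp: card_image inj_on_imageI2 inj_on_imageI)
qed

lemma triple_in_rainbow_sets_iff:
  "{a, b, c} \<in> rainbow_sets E f 3 \<longleftrightarrow>
     a \<in> E \<and> b \<in> E \<and> c \<in> E \<and> f a \<noteq> f b \<and> f a \<noteq> f c \<and> f b \<noteq> f c"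
  unfolding rainbow_sets_def by (auto simp: card_insert_if)

context group
begin

lemma rcos_inv_eq_iff:
  assumes "subgroup H G" "a \<in> carrier G" "b \<in> carrier G"
  shows "H #> inv a = H #> inv b \<longleftrightarrow> inv a \<otimes> b \<in> H"
  using assms repr_independence[of "inv a" H "inv b"] repr_independenceD[of H "inv a" "inv b"]
    subgroup.rcos_module[OF assms(1) is_group, of "inv b" "inv a"]
  by auto

lemma inv_mult_cancel_left:
  assumes "x \<in> carrier G" "a \<in> carrier G" "b \<in> carrier G"
  shows "inv (x \<otimes> a) \<otimes> (x \<otimes> b) = inv a \<otimes> b"
  using assms by (simp add: inv_mult_group m_assoc) (simp add: m_assoc[symmetric])

lemma rcos_inv_mult_eq_iff:
  assumes "subgroup H G" "x \<in> carrier G" "a \<in> carrier G" "b \<in> carrier G"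
  shows "H #> inv (x \<otimes> a) = H #> inv (x \<otimes> b) \<longleftrightarrow> H #> inv a = H #> inv b"
  using assms by (simp add: rcos_inv_eq_iff inv_mult_cancel_left)

lemma rcos_inv_image:
  assumes "subgroup H G"
  shows "(\<lambda>a. H #> inv a) ` carrier G = rcosets H"
  unfolding RCOSETS_def by (force intro: image_eqI[of _ _ "inv _"])

text \<open>Colouring \<open>a\<close> by \<open>H a\<inverse>\<close>, the inverse of its left coset \<open>aH\<close>, makes the colours exactly
  the right cosets counted by the hypothesis on the index.\<close>

lemma fGH_eq_rainbow_sets:
  assumes "subgroup H G"
  shows "fGH G H = rainbow_sets (carrier G) (\<lambda>a. H #> inv a) 3"
proof (intro equalityI subsetI)
  fix B assume "B \<in> fGH G H"
  then obtain a g h where B: "B = {a, a \<otimes> g, a \<otimes> h}"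
    and carrier: "a \<in> carrier G" "g \<in> carrier G" "h \<in> carrier G"
    and "g \<notin> H" "h \<notin> H" "inv g \<otimes> h \<notin> H"
    unfolding fGH_def by blast
  then show "B \<in> rainbow_sets (carrier G) (\<lambda>a. H #> inv a) 3"
    using assms by (simp add: triple_in_rainbow_sets_iff rcos_inv_eq_iff inv_mult_cancel_left
        inv_mult_cancel_left[of a \<one>, simplified])
next
  fix B assume B: "B \<in> rainbow_sets (carrier G) (\<lambda>a. H #> inv a) 3"
  then obtain a b c where abc: "B = {a, b, c}" "a \<noteq> b" "a \<noteq> c" "b \<noteq> c"
    unfolding rainbow_sets_def card_3_iff by blast
  then have carrier: "a \<in> carrier G" "b \<in> carrier G" "c \<in> carrier G"
    and "H #> inv a \<noteq> H #> inv b" "H #> inv a \<noteq> H #> inv c" "H #> inv b \<noteq> H #> inv c"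
    using B by (simp_all add: triple_in_rainbow_sets_iff)
  then have "inv a \<otimes> b \<notin> H" "inv a \<otimes> c \<notin> H" "inv b \<otimes> c \<notin> H"
    using assms by (simp_all add: rcos_inv_eq_iff)
  moreover have "inv (inv a \<otimes> b) \<otimes> (inv a \<otimes> c) = inv b \<otimes> c"
    using carrier by (simp add: inv_mult_cancel_left)
  moreover have "B = {a, a \<otimes> (inv a \<otimes> b), a \<otimes> (inv a \<otimes> c)}"
    using abc carrier by (simp add: m_assoc[symmetric])
  ultimately show "B \<in> fGH G H"
    unfolding fGH_def using carrier
    by (intro CollectI exI[of _ a] exI[of _ "inv a \<otimes> b"] exI[of _ "inv a \<otimes> c"]) simp
qed

end

theorem mainTheorem11:
  fixes G (structure) and H :: "'a set"
  assumes "group G" and "finite (carrier G)" and "subgroup H G"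
    and "card (rcosets H) > 2"
  shows "matroid_bases_rank (carrier G) 3 (fGH G H) \<and>
         (\<forall>x\<in>carrier G. \<forall>B\<in>fGH G H. (\<lambda>b. x \<otimes> b) ` B \<in> fGH G H)"
proof -
  interpret group G by fact
  let ?colour = "\<lambda>a. H #> inv a"
  have bases: "fGH G H = rainbow_sets (carrier G) ?colour 3"
    using assms(3) by (rule fGH_eq_rainbow_sets)
  have "3 \<le> card (?colour ` carrier G)"
    using assms(3,4) by (simp add: rcos_inv_image)
  then have "matroid_bases_rank (carrier G) 3 (fGH G H)"
    unfolding bases using assms(2) by (rule matroid_bases_rank_rainbow_sets[rotated])
  moreover have "(\<lambda>b. x \<otimes> b) ` B \<in> fGH G H" if "x \<in> carrier G" "B \<in> fGH G H" for x B
    using that(2) unfolding bases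
  proof (rule image_in_rainbow_sets[rotated 2])
    show "(\<lambda>b. x \<otimes> b) ` carrier G \<subseteq> carrier G"
      using that(1) by auto
    show "?colour (x \<otimes> a) = ?colour (x \<otimes> b) \<longleftrightarrow> ?colour a = ?colour b"
      if "a \<in> carrier G" "b \<in> carrier G" for a b
      using rcos_inv_mult_eq_iff[OF assms(3) \<open>x \<in> carrier G\<close> that] .
  qed
  ultimately show ?thesis
    by blast
qed

end
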